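(* Fix $m\ge 1$. For every constant $c>2$, \[\liminf_{n\to\infty}\left\|OST_{m,n}^{\,n\log n-n\log\log n-cn}-U_{m,n}\right\|_{TV}\geq 1-\frac{\pi^2}{6(c-2)^2}.\]
   Context: Let $\xi$ be a primitive $m$-th root of unity and $[n]=\{1,\dots,n\}$. The generalized symmetric group $G_{m,n}$ is the set of tuples $(\xi^{k_1},\dots,\xi^{k_n},\sigma)$ with $k_i\in\mathbb{Z}_m$, $\sigma\in S_n$, with multiplication $(\xi^{k_1},\dots,\xi^{k_n},\sigma)(\xi^{k_1'},\dots,\xi^{k_n'},\sigma')=(\xi^{k_1}\xi^{k'_{\sigma(1)}},\dots,\xi^{k_n}\xi^{k'_{\sigma(n)}},\sigma\sigma')$. For $1\le i\le j\le n$, $k\in\mathbb{Z}_m$, let $g_{i,j,k}$ have permutation part the transposition $(ij)$ (identity if $i=j$) and tuple with $\xi^k$ in positions $i$ and $j$ and $1$ elsewhere. $OST_{m,n}$ is the law of $g_{i,j,k}$ with $j$ uniform on $[n]$, then $i$ uniform on $[j]$, $k$ uniform on $\mathbb{Z}_m$ independently (probability $\frac{1}{njm}$ per triple). $OST^t_{m,n}$ is its $t$-fold convolution power (exponents are understood as integers, e.g. rounded). $U_{m,n}$ is the uniform distribution on $G_{m,n}$ and $\|P-Q\|_{TV}=\frac12\sum_g|P(g)-Q(g)|$. *)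

theory Defs
  imports "HOL-Analysis.Analysis" "HOL-Combinatorics.Permutations" "HOL-Combinatorics.Transposition"
begin

text \<open>Elements of the generalized symmetric group G_{m,n} are encoded as pairs (k, sigma),
  where k i in {0..m-1} is the exponent of the root of unity at position i (for i in [n];
  k i = 0 outside [n]) and sigma is a permutation of [n] = {1..n}.\<close>

type_synonym gsg = "(nat \<Rightarrow> nat) \<times> (nat \<Rightarrow> nat)"

definition G :: "nat \<Rightarrow> nat \<Rightarrow> gsg set" where
  "G m n = {(k, \<sigma>). \<sigma> permutes {1..n} \<and>
      (\<forall>i. (i \<in> {1..n} \<longrightarrow> k i < m) \<and> (i \<notin> {1..n} \<longrightarrow> k i = 0))}"

text \<open>(xi^k_1..xi^k_n, sigma)(xi^k'_1..xi^k'_n, sigma') =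
  (xi^(k_1 + k'_(sigma 1)), ..., sigma o sigma').\<close>
definition gmult :: "nat \<Rightarrow> nat \<Rightarrow> gsg \<Rightarrow> gsg \<Rightarrow> gsg" where
  "gmult m n a b = ((\<lambda>i. if i \<in> {1..n} then (fst a i + fst b (snd a i)) mod m else 0),
                    snd a \<circ> snd b)"

definition gone :: gsg where
  "gone = ((\<lambda>i. 0), id)"

definition gen :: "nat \<Rightarrow> nat \<Rightarrow> nat \<Rightarrow> gsg" where
  "gen i j k = ((\<lambda>l. if l = i \<or> l = j then k else 0), Transposition.transpose i j)"

definition OST :: "nat \<Rightarrow> nat \<Rightarrow> gsg \<Rightarrow> real" where
  "OST m n g = (\<Sum>j\<in>{1..n}. \<Sum>i\<in>{1..j}. \<Sum>k\<in>{..<m}.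
       (if g = gen i j k then 1 / (real n * real j * real m) else 0))"

definition conv :: "nat \<Rightarrow> nat \<Rightarrow> (gsg \<Rightarrow> real) \<Rightarrow> (gsg \<Rightarrow> real) \<Rightarrow> gsg \<Rightarrow> real" where
  "conv m n P Q g = (\<Sum>a\<in>G m n. \<Sum>b\<in>G m n. if gmult m n a b = g then P a * Q b else 0)"

fun conv_pow :: "nat \<Rightarrow> nat \<Rightarrow> (gsg \<Rightarrow> real) \<Rightarrow> nat \<Rightarrow> gsg \<Rightarrow> real" where
  "conv_pow m n P 0 = (\<lambda>g. if g = gone then 1 else 0)"
| "conv_pow m n P (Suc t) = conv m n (conv_pow m n P t) P"

definition unif :: "nat \<Rightarrow> nat \<Rightarrow> gsg \<Rightarrow> real" where
  "unif m n g = (if g \<in> G m n then 1 / real (card (G m n)) else 0)"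

definition tv :: "nat \<Rightarrow> nat \<Rightarrow> (gsg \<Rightarrow> real) \<Rightarrow> (gsg \<Rightarrow> real) \<Rightarrow> real" where
  "tv m n P Q = (1/2) * (\<Sum>g\<in>G m n. \<bar>P g - Q g\<bar>)"

end

theory Submission
  imports Defs "HOL-Real_Asymp.Real_Asymp"
begin

text \<open>If no generator of the walk involves position \<open>p\<close> (as \<open>i\<close> or \<open>j\<close>), the product fixes \<open>p\<close>
  with trivial root of unity there, and under the uniform law the elements doing this for some \<open>p\<close>
  in a set \<open>S\<close> have mass at most \<open>|S|/n\<close>. Take for \<open>S\<close> the top \<open>L = n / ln n\<close> positions. A step
  hits a given one of them with probability about \<open>(1 + 1 / ln n) / n\<close>, so after
  \<open>n ln n - n ln ln n - c n\<close> steps the expected number of untouched positions in \<open>S\<close> is about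
  \<open>e^(c-1)\<close>; hits of distinct positions are nearly independent, so by the second-moment method
  all of \<open>S\<close> is hit with probability at most \<open>e^(1-c) + o(1)\<close>. Hence the distance is at least
  \<open>1 - e^(1-c) - o(1)\<close>, and \<open>e^(1-c) < \<pi>\<^sup>2 / (6 (c - 2)\<^sup>2)\<close>.\<close>

lemma gmult_in_G:
  assumes "m \<ge> 1" "a \<in> G m n" "b \<in> G m n"
  shows "gmult m n a b \<in> G m n"
  using assms permutes_compose by (auto simp: gmult_def G_def split: prod.splits)

lemma gone_in_G: "m \<ge> 1 \<Longrightarrow> gone \<in> G m n"
  by (auto simp: gone_def G_def permutes_id)

lemma gen_in_G:
  assumes "1 \<le> i" "i \<le> j" "j \<le> n" "k < m"
  shows "gen i j k \<in> G m n"
  using assms permutes_swap_id[of i "{1..n}" j] by (auto simp: gen_def G_def)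

lemma finite_G: "finite (G m n)"
proof (rule finite_subset)
  show "G m n \<subseteq> {k. \<forall>i. (i \<in> {1..n} \<longrightarrow> k i \<in> {..<m}) \<and> (i \<notin> {1..n} \<longrightarrow> k i = 0)}
                  \<times> {\<sigma>. \<sigma> permutes {1..n}}"
    by (auto simp: G_def)
qed (intro finite_cartesian_product finite_set_of_finite_funs finite_permutations; simp)

lemma card_G_gt_0: "m \<ge> 1 \<Longrightarrow> card (G m n) > 0"
  using finite_G gone_in_G card_gt_0_iff by blast

definition words :: "'a set \<Rightarrow> nat \<Rightarrow> 'a list set" where
  "words X t = {xs. set xs \<subseteq> X \<and> length xs = t}"

lemma words_0 [simp]: "words X 0 = {[]}"
  by (auto simp: words_def)

lemma words_Suc: "words X (Suc t) = (\<lambda>(x, xs). x # xs) ` (X \<times> words X t)"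
  by (auto simp: words_def length_Suc_conv image_iff)

lemma sum_words_Suc: "(\<Sum>ys\<in>words X (Suc t). f ys) = (\<Sum>x\<in>X. \<Sum>xs\<in>words X t. f (x # xs))"
proof -
  have "inj_on (\<lambda>(x, xs). x # xs) (X \<times> words X t)"
    by (auto simp: inj_on_def)
  then show ?thesis
    by (simp add: words_Suc sum.reindex sum.cartesian_product split_def)
qed

lemma sum_words_prod_list:
  fixes f :: "'a \<Rightarrow> 'b::comm_semiring_1"
  shows "(\<Sum>xs\<in>words X t. prod_list (map f xs)) = sum f X ^ t"
proof (induction t)
  case (Suc t)
  have "(\<Sum>xs\<in>words X (Suc t). prod_list (map f xs))
      = (\<Sum>x\<in>X. f x * (\<Sum>xs\<in>words X t. prod_list (map f xs)))"
    by (simp add: sum_words_Suc sum_distrib_left)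
  also have "\<dots> = sum f X ^ Suc t"
    by (simp add: Suc.IH sum_distrib_right)
  finally show ?case .
qed simp

lemma sum_words_prob_all:
  fixes w :: "'a \<Rightarrow> real"
  shows "(\<Sum>xs\<in>words X t. prod_list (map w xs) * of_bool (\<forall>x\<in>set xs. P x))
       = (\<Sum>x\<in>X. w x * of_bool (P x)) ^ t"
proof -
  have "prod_list (map w xs) * of_bool (\<forall>x\<in>set xs. P x) = prod_list (map (\<lambda>x. w x * of_bool (P x)) xs)"
    for xs by (induction xs) auto
  then show ?thesis
    by (simp add: sum_words_prod_list)
qed

lemma second_moment_method:
  fixes w U :: "'a \<Rightarrow> real"
  assumes w: "\<And>x. x \<in> W \<Longrightarrow> w x \<ge> 0" "sum w W = 1"
    and \<mu>: "(\<Sum>x\<in>W. w x * U x) = \<mu>" "\<mu> \<noteq> 0"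
  shows "(\<Sum>x\<in>W. w x * of_bool (U x = 0)) \<le> (\<Sum>x\<in>W. w x * (U x)\<^sup>2) / \<mu>\<^sup>2 - 1"
proof -
  have "(\<Sum>x\<in>W. w x * of_bool (U x = 0)) * \<mu>\<^sup>2 \<le> (\<Sum>x\<in>W. w x * (U x - \<mu>)\<^sup>2)"
    unfolding sum_distrib_right using w(1) by (intro sum_mono) auto
  also have "\<dots> = (\<Sum>x\<in>W. w x * (U x)\<^sup>2) - 2 * \<mu> * (\<Sum>x\<in>W. w x * U x) + \<mu>\<^sup>2 * sum w W"
    by (simp add: power2_diff algebra_simps sum.distrib sum_subtractf sum_distrib_left sum_distrib_right)
  also have "\<dots> = (\<Sum>x\<in>W. w x * (U x)\<^sup>2) - \<mu>\<^sup>2"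
    using \<mu>(1) w(2) by (simp add: power2_eq_square)
  finally show ?thesis
    using \<mu>(2) by (simp add: field_simps)
qed

lemma sum_words_count_avoided:
  fixes w :: "'a \<Rightarrow> real"
  shows "(\<Sum>xs\<in>words X t. prod_list (map w xs) * (\<Sum>p\<in>S. of_bool (\<forall>x\<in>set xs. \<not> T p x)))
       = (\<Sum>p\<in>S. (\<Sum>x\<in>X. w x * of_bool (\<not> T p x)) ^ t)"
  unfolding sum_distrib_left by (subst sum.swap) (simp add: sum_words_prob_all)

lemma sum_words_count_avoided_sq:
  fixes w :: "'a \<Rightarrow> real"
  shows "(\<Sum>xs\<in>words X t. prod_list (map w xs) * (\<Sum>p\<in>S. of_bool (\<forall>x\<in>set xs. \<not> T p x))\<^sup>2)
       = (\<Sum>p\<in>S. \<Sum>p'\<in>S. (\<Sum>x\<in>X. w x * of_bool (\<not> T p x \<and> \<not> T p' x)) ^ t)"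
proof -
  let ?wt = "\<lambda>xs. prod_list (map w xs)"
  have "(\<Sum>p\<in>S. of_bool (\<forall>x\<in>set xs. \<not> T p x))\<^sup>2
      = (\<Sum>p\<in>S. \<Sum>p'\<in>S. of_bool (\<forall>x\<in>set xs. \<not> T p x \<and> \<not> T p' x) :: real)" for xs
    by (simp add: power2_eq_square sum_product ball_conj_distrib of_bool_conj)
  then have "(\<Sum>xs\<in>words X t. ?wt xs * (\<Sum>p\<in>S. of_bool (\<forall>x\<in>set xs. \<not> T p x))\<^sup>2)
      = (\<Sum>xs\<in>words X t. \<Sum>p\<in>S. \<Sum>p'\<in>S. ?wt xs * of_bool (\<forall>x\<in>set xs. \<not> T p x \<and> \<not> T p' x))"
    by (simp add: sum_distrib_left)
  also have "\<dots> = (\<Sum>p\<in>S. \<Sum>p'\<in>S. \<Sum>xs\<in>words X t. ?wt xs * of_bool (\<forall>x\<in>set xs. \<not> T p x \<and> \<not> T p' x))"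
    by (subst sum.swap) (simp add: sum.swap[of _ "words X t"])
  finally show ?thesis
    by (simp add: sum_words_prob_all)
qed

lemma prob_avoid_both_le:
  fixes w :: "'a \<Rightarrow> real"
  assumes "\<And>x. x \<in> X \<Longrightarrow> w x \<ge> 0" "sum w X = 1"
  shows "(\<Sum>x\<in>X. w x * of_bool (\<not> A x \<and> \<not> B x))
      \<le> (\<Sum>x\<in>X. w x * of_bool (\<not> A x)) * (\<Sum>x\<in>X. w x * of_bool (\<not> B x))
         + (\<Sum>x\<in>X. w x * of_bool (A x \<and> B x))"
proof -
  define a where "a = (\<Sum>x\<in>X. w x * of_bool (A x))"
  define b where "b = (\<Sum>x\<in>X. w x * of_bool (B x))"
  have compl: "(\<Sum>x\<in>X. w x * of_bool (\<not> P x)) = 1 - (\<Sum>x\<in>X. w x * of_bool (P x))" for P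
    using assms(2) by (simp add: of_bool_not_iff algebra_simps sum_subtractf)
  have "(\<Sum>x\<in>X. w x * of_bool (\<not> A x \<and> \<not> B x))
      = (\<Sum>x\<in>X. w x - w x * of_bool (A x) - w x * of_bool (B x) + w x * of_bool (A x \<and> B x))"
    by (intro sum.cong) auto
  also have "\<dots> = 1 - a - b + (\<Sum>x\<in>X. w x * of_bool (A x \<and> B x))"
    using assms(2) by (simp add: a_def b_def sum.distrib sum_subtractf)
  also have "1 - a - b \<le> (1 - a) * (1 - b)"
    using assms(1) by (simp add: a_def b_def algebra_simps sum_nonneg)
  finally show ?thesis
    by (simp add: compl a_def b_def)
qed

lemma pow_le_exp_mult_pow:
  fixes u u' v r :: real
  assumes "u \<ge> 1/2" "u' \<ge> 1/2" "v \<ge> 0" "r \<ge> 0" "v \<le> u * u' + r"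
  shows "v ^ t \<le> exp (4 * r * t) * (u ^ t * u' ^ t)"
proof -
  have "u * u' \<ge> 1/4"
    using mult_mono[OF assms(1,2)] assms(1) by simp
  then have "v \<le> u * u' * (1 + 4 * r)"
    using assms(4,5) mult_right_mono[of "1/4" "u * u'" "4 * r"] by (simp add: algebra_simps)
  also have "\<dots> \<le> u * u' * exp (4 * r)"
    using \<open>u * u' \<ge> 1/4\<close> by (intro mult_left_mono) (auto intro: exp_ge_add_one_self)
  finally have "v ^ t \<le> (u * u' * exp (4 * r)) ^ t"
    using assms(3) by (intro power_mono)
  also have "\<dots> = exp (4 * r * t) * (u ^ t * u' ^ t)"
    by (simp add: power_mult_distrib exp_of_nat_mult[symmetric] mult_ac)
  finally show ?thesis .
qed

lemma second_moment_count_avoided_le: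
  fixes X :: "'a set" and w :: "'a \<Rightarrow> real" and T :: "'p \<Rightarrow> 'a \<Rightarrow> bool" and r :: real
  defines "u \<equiv> \<lambda>p. \<Sum>x\<in>X. w x * of_bool (\<not> T p x)"
  assumes w: "\<And>x. x \<in> X \<Longrightarrow> w x \<ge> 0" "sum w X = 1" and "finite S"
    and u_half: "\<And>p. p \<in> S \<Longrightarrow> u p \<ge> 1/2"
    and r: "r \<ge> 0" "\<And>p p'. p \<in> S \<Longrightarrow> p' \<in> S \<Longrightarrow> p \<noteq> p' \<Longrightarrow> (\<Sum>x\<in>X. w x * of_bool (T p x \<and> T p' x)) \<le> r"
  shows "(\<Sum>xs\<in>words X t. prod_list (map w xs) * (\<Sum>p\<in>S. of_bool (\<forall>x\<in>set xs. \<not> T p x))\<^sup>2)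
           \<le> (\<Sum>p\<in>S. u p ^ t) + exp (4 * r * t) * (\<Sum>p\<in>S. u p ^ t)\<^sup>2"
proof -
  define D where "D = exp (4 * r * t)"
  have "(\<Sum>xs\<in>words X t. prod_list (map w xs) * (\<Sum>p\<in>S. of_bool (\<forall>x\<in>set xs. \<not> T p x))\<^sup>2)
      = (\<Sum>p\<in>S. \<Sum>p'\<in>S. (\<Sum>x\<in>X. w x * of_bool (\<not> T p x \<and> \<not> T p' x)) ^ t)"
    by (rule sum_words_count_avoided_sq)
  also have "\<dots> \<le> (\<Sum>p\<in>S. \<Sum>p'\<in>S. (if p = p' then u p ^ t else 0) + D * (u p ^ t * u p' ^ t))"
  proof (intro sum_mono)
    fix p p' assume "p \<in> S" "p' \<in> S"
    show "(\<Sum>x\<in>X. w x * of_bool (\<not> T p x \<and> \<not> T p' x)) ^ t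
        \<le> (if p = p' then u p ^ t else 0) + D * (u p ^ t * u p' ^ t)"
    proof (cases "p = p'")
      case True
      then show ?thesis
        using u_half[OF \<open>p \<in> S\<close>] by (simp add: u_def D_def)
    next
      case False
      have "(\<Sum>x\<in>X. w x * of_bool (\<not> T p x \<and> \<not> T p' x)) \<le> u p * u p' + r"
        using prob_avoid_both_le[OF w, of "T p" "T p'"] r(2)[OF \<open>p \<in> S\<close> \<open>p' \<in> S\<close> False]
        by (simp add: u_def)
      then show ?thesis
        using False u_half \<open>p \<in> S\<close> \<open>p' \<in> S\<close> r(1) w(1)
        by (auto simp: D_def intro!: pow_le_exp_mult_pow sum_nonneg)
    qed
  qed
  also have "\<dots> = (\<Sum>p\<in>S. u p ^ t) + D * (\<Sum>p\<in>S. u p ^ t)\<^sup>2"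
    using \<open>finite S\<close> by (simp add: sum.distrib sum_distrib_left sum_product power2_eq_square
      flip: sum_distrib_left)
  finally show ?thesis
    by (simp add: D_def)
qed

text \<open>The second-moment method applied to the number of points of \<open>S\<close> that no letter of a random
  word hits.\<close>

lemma prob_all_hit_le:
  fixes w :: "'a \<Rightarrow> real" and T :: "'p \<Rightarrow> 'a \<Rightarrow> bool" and q r :: real
  assumes w: "\<And>x. x \<in> X \<Longrightarrow> w x \<ge> 0" "sum w X = 1"
    and S: "finite S" "S \<noteq> {}"
    and q: "q \<le> 1/2" "\<And>p. p \<in> S \<Longrightarrow> (\<Sum>x\<in>X. w x * of_bool (T p x)) \<le> q"
    and r: "r \<ge> 0" "\<And>p p'. p \<in> S \<Longrightarrow> p' \<in> S \<Longrightarrow> p \<noteq> p' \<Longrightarrow> (\<Sum>x\<in>X. w x * of_bool (T p x \<and> T p' x)) \<le> r"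
  shows "(\<Sum>xs\<in>words X t. prod_list (map w xs) * of_bool (\<forall>p\<in>S. \<exists>x\<in>set xs. T p x))
           \<le> 1 / (real (card S) * (1 - q) ^ t) + (exp (4 * r * real t) - 1)"
proof -
  define u where "u p = (\<Sum>x\<in>X. w x * of_bool (\<not> T p x))" for p
  define U where "U xs = (\<Sum>p\<in>S. of_bool (\<forall>x\<in>set xs. \<not> T p x) :: real)" for xs
  define \<mu> where "\<mu> = (\<Sum>p\<in>S. u p ^ t)"
  define D where "D = exp (4 * r * t)"
  let ?wt = "\<lambda>xs. prod_list (map w xs)"
  have u_ge: "u p \<ge> 1 - q" if "p \<in> S" for p
    using q(2)[OF that] w(2) by (simp add: u_def of_bool_not_iff algebra_simps sum_subtractf)
  have u_half: "u p \<ge> 1/2" if "p \<in> S" for p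
    using u_ge[OF that] q(1) by linarith
  have \<mu>_ge: "\<mu> \<ge> card S * (1 - q) ^ t"
    unfolding \<mu>_def using u_ge q(1) by (intro sum_bounded_below power_mono) auto
  moreover have "card S * (1 - q) ^ t > 0"
    using S q(1) by (simp add: card_gt_0_iff)
  ultimately have \<mu>_pos: "\<mu> > 0"
    by linarith
  have EU: "(\<Sum>xs\<in>words X t. ?wt xs * U xs) = \<mu>"
    by (simp add: U_def \<mu>_def u_def sum_words_count_avoided)
  have EU2: "(\<Sum>xs\<in>words X t. ?wt xs * (U xs)\<^sup>2) \<le> \<mu> + D * \<mu>\<^sup>2"
    unfolding U_def \<mu>_def D_def u_def
    by (rule second_moment_count_avoided_le[OF w S(1) u_half[unfolded u_def] r])
  have all_hit_iff: "(\<forall>p\<in>S. \<exists>x\<in>set xs. T p x) \<longleftrightarrow> U xs = 0" for xs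
    using S(1) by (auto simp: U_def sum_nonneg_eq_0_iff)
  have "(\<Sum>xs\<in>words X t. ?wt xs * of_bool (\<forall>p\<in>S. \<exists>x\<in>set xs. T p x))
      \<le> (\<Sum>xs\<in>words X t. ?wt xs * (U xs)\<^sup>2) / \<mu>\<^sup>2 - 1"
  proof (unfold all_hit_iff, rule second_moment_method[OF _ _ EU])
    show "?wt xs \<ge> 0" if "xs \<in> words X t" for xs
      using that w(1) by (force simp: words_def intro!: prod_list_nonneg)
    show "(\<Sum>xs\<in>words X t. ?wt xs) = 1"
      using w(2) by (simp add: sum_words_prod_list)
  qed (use \<mu>_pos in simp)
  also have "\<dots> \<le> (\<mu> + D * \<mu>\<^sup>2) / \<mu>\<^sup>2 - 1"
    using EU2 by (simp add: divide_right_mono)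
  also have "\<dots> = 1 / \<mu> + (D - 1)"
    using \<mu>_pos by (simp add: field_simps power2_eq_square)
  also have "\<dots> \<le> 1 / (card S * (1 - q) ^ t) + (D - 1)"
    using \<mu>_ge \<open>card S * (1 - q) ^ t > 0\<close> by (simp add: frac_le)
  finally show ?thesis
    by (simp add: D_def)
qed

definition gen_index :: "nat \<Rightarrow> nat \<Rightarrow> (nat \<times> nat \<times> nat) set" where
  "gen_index m n = (SIGMA j:{1..n}. SIGMA i:{1..j}. {..<m})"

fun gen_prob :: "nat \<Rightarrow> nat \<Rightarrow> nat \<times> nat \<times> nat \<Rightarrow> real" where
  "gen_prob m n (j, i, k) = 1 / (real n * real j * real m)"

fun gen_of :: "nat \<times> nat \<times> nat \<Rightarrow> gsg" where
  "gen_of (j, i, k) = gen i j k"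

text \<open>Words list the steps latest first, matching \<open>conv_pow m n P (Suc t) = conv m n (conv_pow m n P t) P\<close>.\<close>

fun walk :: "nat \<Rightarrow> nat \<Rightarrow> (nat \<times> nat \<times> nat) list \<Rightarrow> gsg" where
  "walk m n [] = gone"
| "walk m n (x # xs) = gmult m n (walk m n xs) (gen_of x)"

lemma sum_gen_index:
  "(\<Sum>x\<in>gen_index m n. f x) = (\<Sum>j=1..n. \<Sum>i=1..j. \<Sum>k<m. f (j, i, k))"
proof -
  have "(\<Sum>x\<in>gen_index m n. f x) = (\<Sum>j=1..n. \<Sum>y\<in>(SIGMA i:{1..j}. {..<m}). f (j, y))"
    unfolding gen_index_def by (subst sum.Sigma) (auto simp: split_def)
  also have "\<dots> = (\<Sum>j=1..n. \<Sum>i=1..j. \<Sum>k<m. f (j, i, k))"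
    by (intro sum.cong refl, subst sum.Sigma) (auto simp: split_def)
  finally show ?thesis .
qed

lemma gen_of_in_G: "x \<in> gen_index m n \<Longrightarrow> gen_of x \<in> G m n"
  by (auto simp: gen_index_def intro!: gen_in_G)

lemma walk_in_G: "m \<ge> 1 \<Longrightarrow> set xs \<subseteq> gen_index m n \<Longrightarrow> walk m n xs \<in> G m n"
  by (induction xs) (auto intro: gmult_in_G gone_in_G gen_of_in_G)

lemma gen_prob_nonneg: "gen_prob m n x \<ge> 0"
  by (cases x) auto

lemma sum_gen_prob:
  assumes "m \<ge> 1" "n \<ge> 1"
  shows "sum (gen_prob m n) (gen_index m n) = 1"
  using assms by (simp add: sum_gen_index)

lemma OST_eq_sum_gen_index:
  "OST m n g = (\<Sum>x\<in>gen_index m n. if g = gen_of x then gen_prob m n x else 0)"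
  unfolding OST_def sum_gen_index by (simp cong: if_cong)

lemma sum_OST_mult:
  "(\<Sum>b\<in>G m n. OST m n b * h b) = (\<Sum>x\<in>gen_index m n. gen_prob m n x * h (gen_of x))"
proof -
  have "(\<Sum>b\<in>G m n. OST m n b * h b)
      = (\<Sum>x\<in>gen_index m n. \<Sum>b\<in>G m n. if b = gen_of x then gen_prob m n x * h b else 0)"
    unfolding OST_eq_sum_gen_index sum_distrib_right by (subst sum.swap) (auto intro!: sum.cong)
  also have "\<dots> = (\<Sum>x\<in>gen_index m n. gen_prob m n x * h (gen_of x))"
    using gen_of_in_G by (simp add: finite_G)
  finally show ?thesis .
qed

lemma sum_conv_pow_OST_mult:
  assumes "m \<ge> 1"
  shows "(\<Sum>g\<in>G m n. conv_pow m n (OST m n) t g * h g)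
       = (\<Sum>xs\<in>words (gen_index m n) t. prod_list (map (gen_prob m n) xs) * h (walk m n xs))"
proof (induction t arbitrary: h)
  case 0
  have "(\<Sum>g\<in>G m n. conv_pow m n (OST m n) 0 g * h g) = (\<Sum>g\<in>G m n. if g = gone then h g else 0)"
    by (intro sum.cong) auto
  then show ?case
    using gone_in_G[OF assms] by (simp add: finite_G)
next
  case (Suc t)
  let ?P = "conv_pow m n (OST m n) t"
  have "(\<Sum>g\<in>G m n. conv_pow m n (OST m n) (Suc t) g * h g)
      = (\<Sum>g\<in>G m n. \<Sum>a\<in>G m n. \<Sum>b\<in>G m n. if gmult m n a b = g then ?P a * OST m n b * h g else 0)"
    unfolding conv_pow.simps conv_def sum_distrib_right by (intro sum.cong refl) simp
  also have "\<dots> = (\<Sum>a\<in>G m n. \<Sum>b\<in>G m n. \<Sum>g\<in>G m n. if gmult m n a b = g then ?P a * OST m n b * h g else 0)"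
    by (subst sum.swap, rule sum.cong[OF refl], rule sum.swap)
  also have "\<dots> = (\<Sum>a\<in>G m n. ?P a * (\<Sum>b\<in>G m n. OST m n b * h (gmult m n a b)))"
    using gmult_in_G[OF assms] by (simp add: finite_G sum_distrib_left mult.assoc)
  also have "\<dots> = (\<Sum>xs\<in>words (gen_index m n) t.
                    prod_list (map (gen_prob m n) xs) * (\<Sum>b\<in>G m n. OST m n b * h (gmult m n (walk m n xs) b)))"
    by (rule Suc.IH)
  also have "\<dots> = (\<Sum>xs\<in>words (gen_index m n) t. \<Sum>x\<in>gen_index m n.
                    prod_list (map (gen_prob m n) (x # xs)) * h (walk m n (x # xs)))"
    by (simp add: sum_OST_mult sum_distrib_left mult_ac)
  also have "\<dots> = (\<Sum>xs\<in>words (gen_index m n) (Suc t).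
                    prod_list (map (gen_prob m n) xs) * h (walk m n xs))"
    unfolding sum_words_Suc by (rule sum.swap)
  finally show ?case .
qed

lemma tv_ge_diff:
  assumes "sum P (G m n) = sum Q (G m n)"
  shows "tv m n P Q \<ge> (\<Sum>g\<in>G m n. P g * of_bool (g \<in> A)) - (\<Sum>g\<in>G m n. Q g * of_bool (g \<in> A))"
proof -
  have "(\<Sum>g\<in>G m n. (P g - Q g) * (2 * of_bool (g \<in> A) - 1)) \<le> (\<Sum>g\<in>G m n. \<bar>P g - Q g\<bar>)"
    by (intro sum_mono) (auto simp: abs_if)
  moreover have "(\<Sum>g\<in>G m n. (P g - Q g) * (2 * of_bool (g \<in> A) - 1))
      = 2 * ((\<Sum>g\<in>G m n. P g * of_bool (g \<in> A)) - (\<Sum>g\<in>G m n. Q g * of_bool (g \<in> A)))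
        - (sum P (G m n) - sum Q (G m n))"
    by (simp add: algebra_simps sum_subtractf sum.distrib sum_distrib_left)
  ultimately show ?thesis
    using assms by (simp add: tv_def)
qed

text \<open>The stabiliser of the point \<open>(p, \<xi>\<^sup>0)\<close> in the action of \<open>G m n\<close> on \<open>[n] \<times> \<int>\<^sub>m\<close>.\<close>

definition Stab :: "nat \<Rightarrow> nat \<Rightarrow> nat \<Rightarrow> gsg set" where
  "Stab m n p = {g \<in> G m n. snd g p = p \<and> fst g p = 0}"

lemma card_Stab_mult_le:
  assumes p: "p \<in> {1..n}"
  shows "card (Stab m n p) * n \<le> card (G m n)"
proof -
  \<comment> \<open>\<open>\<phi>\<close> is injective because \<open>q\<close> is recovered from \<open>\<phi> (g, q)\<close> as the point it sends to \<open>p\<close>.\<close>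
  define \<phi> where "\<phi> = (\<lambda>(g :: gsg, q). (fst g, snd g \<circ> Transposition.transpose p q))"
  have \<phi>_eq: "g = g' \<and> q = q'"
    if g: "g \<in> Stab m n p" and g': "g' \<in> Stab m n p" and eq: "\<phi> (g, q) = \<phi> (g', q')" for g g' q q'
  proof -
    have \<tau>: "snd g \<circ> Transposition.transpose p q = snd g' \<circ> Transposition.transpose p q'"
      using eq by (simp add: \<phi>_def)
    have "inj (snd g')" "snd g p = p" "snd g' p = p"
      using g g' by (auto simp: Stab_def G_def intro: permutes_inj)
    have "snd g' (Transposition.transpose p q' q) = snd g' p"
      using fun_cong[OF \<tau>, of q] \<open>snd g p = p\<close> \<open>snd g' p = p\<close> by simp
    then have "q = q'"
      using \<open>inj (snd g')\<close> by (auto simp: inj_eq transpose_eq_iff)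
    moreover have "snd g = snd g'"
      using arg_cong[OF \<tau>, of "\<lambda>f. f \<circ> Transposition.transpose p q"] \<open>q = q'\<close> by (simp add: comp_assoc)
    ultimately show ?thesis
      using eq by (simp add: \<phi>_def prod_eq_iff)
  qed
  have inj: "inj_on \<phi> (Stab m n p \<times> {1..n})"
    by (intro inj_onI) (auto dest: \<phi>_eq)
  have "\<phi> (g, q) \<in> G m n" if "g \<in> Stab m n p" "q \<in> {1..n}" for g q
  proof -
    have "Transposition.transpose p q permutes {1..n}"
      using p that(2) by (intro permutes_swap_id) auto
    then have "snd g \<circ> Transposition.transpose p q permutes {1..n}"
      using that(1) by (intro permutes_compose) (auto simp: Stab_def G_def)
    then show ?thesis
      using that(1) by (auto simp: \<phi>_def Stab_def G_def split_beta)
  qed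
  then have "\<phi> ` (Stab m n p \<times> {1..n}) \<subseteq> G m n"
    by auto
  with inj have "card (Stab m n p \<times> {1..n}) \<le> card (G m n)"
    using card_inj_on_le finite_G by blast
  then show ?thesis
    by (simp add: card_cartesian_product)
qed

lemma unif_Union_Stab_le:
  assumes "m \<ge> 1" "S \<subseteq> {1..n}"
  shows "(\<Sum>g\<in>G m n. unif m n g * of_bool (g \<in> (\<Union>p\<in>S. Stab m n p))) \<le> real (card S) / real n"
proof (cases "n = 0")
  case False
  let ?A = "\<Union>p\<in>S. Stab m n p"
  have finS: "finite S"
    using assms(2) finite_subset by blast
  have "?A \<subseteq> G m n"
    by (auto simp: Stab_def)
  have "(\<Sum>g\<in>G m n. unif m n g * of_bool (g \<in> ?A)) = (\<Sum>g\<in>G m n. if g \<in> ?A then 1 / card (G m n) else 0)"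
    by (intro sum.cong) (auto simp: unif_def)
  also have "\<dots> = card ?A / card (G m n)"
  proof -
    have "{g \<in> G m n. g \<in> ?A} = ?A"
      using \<open>?A \<subseteq> G m n\<close> by auto
    then show ?thesis
      using sum.inter_filter[OF finite_G, of "\<lambda>_. 1 / card (G m n)" m n "\<lambda>g. g \<in> ?A"] by simp
  qed
  also have "\<dots> \<le> card S / n"
  proof -
    have "card ?A * n \<le> (\<Sum>p\<in>S. card (Stab m n p)) * n"
      using finS by (intro mult_right_mono card_UN_le) auto
    also have "\<dots> \<le> (\<Sum>p\<in>S. card (G m n))"
      unfolding sum_distrib_right using assms(2) by (intro sum_mono card_Stab_mult_le) auto
    finally have "real (card ?A) * n \<le> card S * real (card (G m n))"
      by (simp flip: of_nat_mult)
    then show ?thesis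
      using False card_G_gt_0[OF assms(1)] by (simp add: field_simps)
  qed
  finally show ?thesis .
qed (use assms in simp)

fun hits :: "nat \<Rightarrow> nat \<times> nat \<times> nat \<Rightarrow> bool" where
  "hits p (j, i, k) \<longleftrightarrow> p = i \<or> p = j"

lemma walk_in_Stab:
  assumes "m \<ge> 1" "p \<in> {1..n}" "set xs \<subseteq> gen_index m n" "\<forall>x\<in>set xs. \<not> hits p x"
  shows "walk m n xs \<in> Stab m n p"
proof -
  have "snd (walk m n xs) p = p \<and> fst (walk m n xs) p = 0"
    using assms(4)
  proof (induction xs)
    case Nil
    then show ?case by (simp add: gone_def)
  next
    case (Cons x xs)
    then show ?case
      using assms(2) by (cases x) (auto simp: gmult_def gen_def)
  qed
  then show ?thesis
    using walk_in_G[OF assms(1,3)] by (simp add: Stab_def)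
qed

lemma tv_conv_pow_OST_ge:
  assumes "m \<ge> 1" "n \<ge> 1" "S \<subseteq> {1..n}"
  shows "tv m n (conv_pow m n (OST m n) t) (unif m n) \<ge>
    1 - (\<Sum>xs\<in>words (gen_index m n) t.
           prod_list (map (gen_prob m n) xs) * of_bool (\<forall>p\<in>S. \<exists>x\<in>set xs. hits p x))
      - real (card S) / real n"
proof -
  let ?A = "\<Union>p\<in>S. Stab m n p"
  let ?P = "conv_pow m n (OST m n) t"
  let ?wt = "\<lambda>xs. prod_list (map (gen_prob m n) xs)"
  have total: "(\<Sum>xs\<in>words (gen_index m n) t. ?wt xs) = 1"
    using sum_gen_prob[OF assms(1,2)] by (simp add: sum_words_prod_list)
  have "1 - (\<Sum>xs\<in>words (gen_index m n) t. ?wt xs * of_bool (\<forall>p\<in>S. \<exists>x\<in>set xs. hits p x))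
      = (\<Sum>xs\<in>words (gen_index m n) t. ?wt xs * of_bool (\<exists>p\<in>S. \<forall>x\<in>set xs. \<not> hits p x))"
    unfolding total[symmetric] sum_subtractf[symmetric] by (intro sum.cong) auto
  also have "\<dots> \<le> (\<Sum>xs\<in>words (gen_index m n) t. ?wt xs * of_bool (walk m n xs \<in> ?A))"
  proof (intro sum_mono mult_left_mono)
    fix xs assume xs: "xs \<in> words (gen_index m n) t"
    show "of_bool (\<exists>p\<in>S. \<forall>x\<in>set xs. \<not> hits p x) \<le> (of_bool (walk m n xs \<in> ?A) :: real)"
    proof (cases "\<exists>p\<in>S. \<forall>x\<in>set xs. \<not> hits p x")
      case True
      then obtain p where "p \<in> S" "\<forall>x\<in>set xs. \<not> hits p x"
        by blast
      then have "walk m n xs \<in> Stab m n p"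
        using walk_in_Stab[OF assms(1)] assms(3) xs by (auto simp: words_def)
      with \<open>p \<in> S\<close> show ?thesis
        by auto
    qed auto
    show "?wt xs \<ge> 0"
      by (rule prod_list_nonneg) (auto simp: gen_prob_nonneg)
  qed
  also have "\<dots> = (\<Sum>g\<in>G m n. ?P g * of_bool (g \<in> ?A))"
    by (rule sum_conv_pow_OST_mult[OF assms(1), symmetric])
  finally have "(\<Sum>g\<in>G m n. ?P g * of_bool (g \<in> ?A))
      \<ge> 1 - (\<Sum>xs\<in>words (gen_index m n) t. ?wt xs * of_bool (\<forall>p\<in>S. \<exists>x\<in>set xs. hits p x))" .
  moreover have "sum ?P (G m n) = sum (unif m n) (G m n)"
    using sum_conv_pow_OST_mult[OF assms(1), of n t "\<lambda>_. 1"] total card_G_gt_0[OF assms(1)]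
    by (simp add: unif_def)
  ultimately show ?thesis
    using tv_ge_diff[of ?P m n "unif m n" ?A] unif_Union_Stab_le[OF assms(1,3)] by linarith
qed

lemma sum_gen_prob_row:
  assumes "m \<ge> 1"
  shows "(\<Sum>i=1..j. \<Sum>k<m. gen_prob m n (j, i, k) * of_bool (P i))
           = real (card {i\<in>{1..j}. P i}) / (real n * real j)"
proof -
  have "(\<Sum>k<m. gen_prob m n (j, i, k) * of_bool (P i)) = of_bool (P i) / (real n * real j)" for i
    using assms by simp
  then show ?thesis
    by (simp add: sum_divide_distrib[symmetric] Int_def)
qed

lemma row_card_div_le:
  assumes "A \<subseteq> (if c then {a} else {})" "c \<Longrightarrow> n < j + L" "L < n"
  shows "card A / (real n * real j) \<le> (if c then 1 / (real n * (real n - real L)) else 0)"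
proof -
  have "card A \<le> card (if c then {a} else {})"
    by (rule card_mono) (use assms(1) in auto)
  then have "real (card A) \<le> of_bool c"
    by (cases c) auto
  then have "card A / (real n * real j) \<le> of_bool c / (real n * real j)"
    by (rule divide_right_mono) simp
  also have "\<dots> \<le> (if c then 1 / (real n * (real n - real L)) else 0)"
    using assms(2,3) by (auto intro!: divide_left_mono mult_left_mono mult_pos_pos)
  finally show ?thesis .
qed

lemma prob_hits_le:
  assumes "m \<ge> 1" "L < n" "n < p + L" "p \<le> n"
  shows "(\<Sum>x\<in>gen_index m n. gen_prob m n x * of_bool (hits p x))
           \<le> 1 / real n + real L / (real n * (real n - real L))"
proof -
  let ?c = "1 / (real n * (real n - real L))"
  have row: "card {i\<in>{1..j}. p = i \<or> p = j} / (real n * real j)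
      \<le> (if j = p then 1 / real n else 0) + (if p < j then ?c else 0)" if "j \<in> {1..n}" for j
  proof (cases "j = p")
    case False
    then have "{i\<in>{1..j}. p = i \<or> p = j} \<subseteq> (if p < j then {p} else {})"
      by auto
    moreover have "p < j \<Longrightarrow> n < j + L"
      using assms(3) by linarith
    ultimately show ?thesis
      using row_card_div_le[of _ "p < j" p n j L] assms(2) False by simp
  next
    case True
    then have "{i\<in>{1..j}. p = i \<or> p = j} = {1..p}"
      by auto
    with True that show ?thesis
      by simp
  qed
  have "(\<Sum>x\<in>gen_index m n. gen_prob m n x * of_bool (hits p x))
      \<le> (\<Sum>j=1..n. (if j = p then 1 / real n else 0) + (if p < j then ?c else 0))"
    unfolding sum_gen_index hits.simps sum_gen_prob_row[OF assms(1)] using row by (intro sum_mono) simp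
  also have "\<dots> = 1 / real n + card {p<..n} * ?c"
  proof -
    have "{1..n} \<inter> {j. p < j} = {p<..n}"
      by auto
    then show ?thesis
      using assms by (simp add: sum.distrib sum.If_cases)
  qed
  also have "\<dots> \<le> 1 / real n + real L * ?c"
    using assms by (intro add_left_mono mult_right_mono) auto
  finally show ?thesis
    by simp
qed

lemma prob_hits_both_le:
  assumes "m \<ge> 1" "L < n" "n < p + L" "n < p' + L" "p \<le> n" "p' \<le> n" "p \<noteq> p'"
  shows "(\<Sum>x\<in>gen_index m n. gen_prob m n x * of_bool (hits p x \<and> hits p' x))
           \<le> 1 / (real n * (real n - real L))"
proof -
  let ?c = "1 / (real n * (real n - real L))"
  have row: "card {i\<in>{1..j}. (p = i \<or> p = j) \<and> (p' = i \<or> p' = j)} / (real n * real j)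
      \<le> (if j = max p p' then ?c else 0)" for j
  proof -
    have "{i\<in>{1..j}. (p = i \<or> p = j) \<and> (p' = i \<or> p' = j)} \<subseteq> (if j = max p p' then {min p p'} else {})"
      using assms(7) by (auto simp: max_def min_def)
    with assms(2-4) show ?thesis
      by (intro row_card_div_le) (auto simp: max_def)
  qed
  have "(\<Sum>x\<in>gen_index m n. gen_prob m n x * of_bool (hits p x \<and> hits p' x))
      \<le> (\<Sum>j=1..n. if j = max p p' then ?c else 0)"
    unfolding sum_gen_index hits.simps sum_gen_prob_row[OF assms(1)] using row by (intro sum_mono) simp
  also have "\<dots> = ?c"
    using assms by (simp add: max_def)
  finally show ?thesis .
qed

lemma tv_conv_pow_OST_ge_top:
  fixes n L t :: nat
  defines "q \<equiv> 1 / real n + real L / (real n * (real n - real L))"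
  assumes "m \<ge> 1" "1 \<le> L" "L < n" "q \<le> 1/2"
  shows "tv m n (conv_pow m n (OST m n) t) (unif m n)
           \<ge> 1 - 1 / (real L * (1 - q) ^ t) - (exp (4 * real t / (real n * (real n - real L))) - 1)
              - real L / real n"
proof -
  define S where "S = {n - L + 1..n}"
  have S: "S \<subseteq> {1..n}" "finite S" "S \<noteq> {}" "card S = L"
    using assms(3,4) by (auto simp: S_def)
  have top: "n < p + L" "p \<le> n" if "p \<in> S" for p
    using that assms(4) by (auto simp: S_def)
  have "(\<Sum>xs\<in>words (gen_index m n) t.
          prod_list (map (gen_prob m n) xs) * of_bool (\<forall>p\<in>S. \<exists>x\<in>set xs. hits p x))
      \<le> 1 / (card S * (1 - q) ^ t) + (exp (4 * (1 / (real n * (real n - real L))) * t) - 1)"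
    using assms(2-5) S(2,3) top
    by (intro prob_all_hit_le) (auto simp: q_def gen_prob_nonneg sum_gen_prob intro!: prob_hits_le prob_hits_both_le)
  then show ?thesis
    using tv_conv_pow_OST_ge[OF assms(2) _ S(1), of t] S(4) assms(3,4) by simp
qed

definition steps :: "real \<Rightarrow> real \<Rightarrow> real" where
  "steps c x = x * ln x - x * ln (ln x) - c * x"

text \<open>Bounds the per-step hit probability of \<open>prob_hits_le\<close> when \<open>L \<le> n / ln n\<close>.\<close>

definition hit_rate :: "real \<Rightarrow> real" where
  "hit_rate x = 1 / x + 1 / (x * (ln x - 1))"

definition tv_lower_bound :: "real \<Rightarrow> real \<Rightarrow> real" where
  "tv_lower_bound c x =
     1 - 1 / ((x / ln x - 1) * exp (- steps c x * (hit_rate x + 2 * hit_rate x ^ 2)))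
       - (exp (4 * steps c x / (x * (x - x / ln x))) - 1) - 1 / ln x"

lemma prob_hits_top_le_hit_rate:
  fixes x L :: real
  assumes "ln x \<ge> 2" "x > 0" "L \<le> x / ln x" "L < x"
  shows "1 / x + L / (x * (x - L)) \<le> hit_rate x"
proof -
  have "L * ln x \<le> x"
    using assms(1,3) by (simp add: pos_le_divide_eq)
  then have "L \<le> (x - L) / (ln x - 1)"
    using assms(1) by (simp add: pos_le_divide_eq algebra_simps)
  then have "L / (x - L) \<le> 1 / (ln x - 1)"
    using assms(4) by (simp add: pos_divide_le_eq)
  then have "L / (x - L) / x \<le> 1 / (ln x - 1) / x"
    using assms(2) by (intro divide_right_mono) auto
  then show ?thesis
    by (simp add: hit_rate_def mult.commute)
qed

lemma exp_le_one_minus_pow: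
  fixes q Q T :: real
  assumes "0 \<le> q" "q \<le> Q" "Q \<le> 1/2" "real t \<le> T"
  shows "exp (- T * (Q + 2 * Q\<^sup>2)) \<le> (1 - q) ^ t"
proof -
  have "exp (- T * (Q + 2 * Q\<^sup>2)) \<le> exp (- (Q + 2 * Q\<^sup>2) * real t)"
    using mult_right_mono[OF assms(4), of "Q + 2 * Q\<^sup>2"] assms(1,2) by (simp add: algebra_simps)
  also have "\<dots> = exp (- (Q + 2 * Q\<^sup>2)) ^ t"
    by (rule exp_of_nat2_mult)
  also have "\<dots> \<le> (1 - Q) ^ t"
  proof (intro power_mono)
    have "- (Q + 2 * Q\<^sup>2) \<le> ln (1 - Q)"
      using ln_one_minus_pos_lower_bound[of Q] assms(1-3) by simp
    then have "exp (- (Q + 2 * Q\<^sup>2)) \<le> exp (ln (1 - Q))"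
      by (simp only: exp_le_cancel_iff)
    then show "exp (- (Q + 2 * Q\<^sup>2)) \<le> 1 - Q"
      using assms(3) by simp
  qed simp
  also have "\<dots> \<le> (1 - q) ^ t"
    using assms(2,3) by (intro power_mono) auto
  finally show ?thesis .
qed

lemma nat_floor_div_ln_bounds:
  fixes n :: nat
  defines "L \<equiv> nat \<lfloor>real n / ln (real n)\<rfloor>"
  assumes "ln (real n) \<ge> 2" "real n / ln (real n) \<ge> 2"
  shows "real n / ln (real n) - 1 \<le> L" "L \<le> real n / ln (real n)" "1 \<le> L" "L < n"
proof -
  have "real n / ln (real n) > 0"
    using assms(3) by linarith
  then have "real n > 0"
    using assms(2) by (simp add: zero_less_divide_iff)
  have "real L = of_int \<lfloor>real n / ln (real n)\<rfloor>"
    using \<open>real n / ln (real n) > 0\<close> by (simp add: L_def)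
  then show L: "real n / ln (real n) - 1 \<le> L" "L \<le> real n / ln (real n)"
    by linarith+
  have "real n / ln (real n) \<le> real n / 2"
    using assms(2) \<open>real n > 0\<close> by (intro divide_left_mono) linarith+
  then show "1 \<le> L" "L < n"
    using L assms(3) \<open>real n > 0\<close> by linarith+
qed

lemma tv_lower_bound_le_tv:
  fixes m n :: nat and c :: real
  defines "l \<equiv> ln (real n)" and "T \<equiv> steps c (real n)" and "Q \<equiv> hit_rate (real n)"
  assumes "m \<ge> 1" "l \<ge> 2" "T \<ge> 0" "Q \<le> 1/2" "real n / l \<ge> 2"
  shows "tv_lower_bound c (real n) \<le> tv m n (conv_pow m n (OST m n) (nat \<lfloor>T\<rfloor>)) (unif m n)"
proof -
  define t where "t = nat \<lfloor>T\<rfloor>"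
  define L where "L = nat \<lfloor>real n / l\<rfloor>"
  define q where "q = 1 / real n + real L / (real n * (real n - real L))"
  have L: "real n / l - 1 \<le> L" "L \<le> real n / l" "1 \<le> L" "L < n"
    using nat_floor_div_ln_bounds[of n] assms(5,8) by (simp_all add: L_def l_def)
  then have n_pos: "real n > 0"
    by simp
  have "real n / l \<le> real n / 2"
    using assms(5) n_pos by (intro divide_left_mono) auto
  have "q \<le> Q"
    unfolding q_def Q_def using assms(5) n_pos L(2,4)
    by (intro prob_hits_top_le_hit_rate) (auto simp: l_def)
  have "real t \<le> T"
    using assms(6) by (simp add: t_def)
  define E where "E = (real n / l - 1) * exp (- T * (Q + 2 * Q\<^sup>2))"
  have "E > 0"
    using assms(8) by (simp add: E_def)
  have "E \<le> real L * (1 - q) ^ t"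
    unfolding E_def using L(1) assms(7,8) \<open>q \<le> Q\<close> \<open>real t \<le> T\<close> L(4)
    by (intro mult_mono exp_le_one_minus_pow) (auto simp: q_def)
  then have A: "1 / (real L * (1 - q) ^ t) \<le> 1 / E"
    using \<open>E > 0\<close> by (intro divide_left_mono) auto
  have "real n * (real n - real n / l) \<le> real n * (real n - real L)"
    using L(2) n_pos by simp
  moreover have "real n * (real n - real n / l) > 0"
    using \<open>real n / l \<le> real n / 2\<close> n_pos by (intro mult_pos_pos) linarith+
  ultimately have "4 * real t / (real n * (real n - real L)) \<le> 4 * T / (real n * (real n - real n / l))"
    using \<open>real t \<le> T\<close> by (intro frac_le) auto
  then have B: "exp (4 * real t / (real n * (real n - real L))) \<le> exp (4 * T / (real n * (real n - real n / l)))"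
    by simp
  have C: "real L / real n \<le> 1 / l"
    using L(2) n_pos assms(5) by (simp add: field_simps)
  have "q \<le> 1/2"
    using \<open>q \<le> Q\<close> assms(7) by linarith
  then have "tv m n (conv_pow m n (OST m n) t) (unif m n)
      \<ge> 1 - 1 / (real L * (1 - q) ^ t) - (exp (4 * real t / (real n * (real n - real L))) - 1) - real L / real n"
    unfolding q_def by (rule tv_conv_pow_OST_ge_top[OF assms(4) L(3,4)])
  moreover have "tv_lower_bound c (real n) = 1 - 1 / E - (exp (4 * T / (real n * (real n - real n / l))) - 1) - 1 / l"
    by (simp add: tv_lower_bound_def E_def T_def Q_def l_def)
  ultimately show ?thesis
    using A B C unfolding t_def by linarith
qed

lemma tendsto_tv_lower_bound: "(tv_lower_bound c \<longlongrightarrow> 1 - exp (1 - c)) at_top"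
proof -
  have "((\<lambda>x. 1 / ((x / ln x - 1) * exp (- steps c x * (hit_rate x + 2 * hit_rate x ^ 2))))
          \<longlongrightarrow> inverse (exp (c - 1))) at_top"
    unfolding steps_def hit_rate_def by real_asymp
  moreover have "((\<lambda>x. exp (4 * steps c x / (x * (x - x / ln x)))) \<longlongrightarrow> 1) at_top"
    unfolding steps_def by real_asymp
  moreover have "((\<lambda>x::real. 1 / ln x) \<longlongrightarrow> 0) at_top"
    by real_asymp
  ultimately have "(tv_lower_bound c \<longlongrightarrow> 1 - inverse (exp (c - 1)) - (1 - 1) - 0) at_top"
    unfolding tv_lower_bound_def by (intro tendsto_diff tendsto_const)
  then show ?thesis
    by (simp add: exp_diff)
qed

lemma eventually_tv_lower_bound_conditions:
  "eventually (\<lambda>x. ln x \<ge> 2 \<and> steps c x \<ge> 0 \<and> hit_rate x \<le> 1/2 \<and> x / ln x \<ge> 2) at_top"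
proof -
  have "eventually (\<lambda>x::real. ln x \<ge> 2) at_top"
    by real_asymp
  moreover have "eventually (\<lambda>x. steps c x \<ge> 0) at_top"
    unfolding steps_def by real_asymp
  moreover have "eventually (\<lambda>x. hit_rate x \<le> 1/2) at_top"
    unfolding hit_rate_def by real_asymp
  moreover have "eventually (\<lambda>x::real. x / ln x \<ge> 2) at_top"
    by real_asymp
  ultimately show ?thesis
    by eventually_elim auto
qed

lemma exp_one_minus_lt:
  fixes c :: real
  assumes "c > 2"
  shows "exp (1 - c) < pi\<^sup>2 / (6 * (c - 2)\<^sup>2)"
proof -
  define y where "y = c - 2"
  have "y > 0"
    using assms by (simp add: y_def)
  have "y\<^sup>2 < 2 * (1 + y + y\<^sup>2 / 2)"
    using \<open>y > 0\<close> by (simp add: algebra_simps)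
  also have "\<dots> \<le> exp 1 * exp y"
    using exp_ge_add_one_self[of 1] exp_lower_Taylor_quadratic[of y] \<open>y > 0\<close>
    by (intro mult_mono) auto
  also have "\<dots> = exp (c - 1)"
    by (simp add: y_def flip: exp_add)
  finally have "y\<^sup>2 < exp (c - 1)" .
  have "pi\<^sup>2 > (9 :: real)"
    using power_strict_mono[OF pi_gt3, of 2] by simp
  have "6 * y\<^sup>2 \<le> 9 * y\<^sup>2"
    by simp
  also have "\<dots> < 9 * exp (c - 1)"
    using \<open>y\<^sup>2 < exp (c - 1)\<close> by simp
  also have "\<dots> < pi\<^sup>2 * exp (c - 1)"
    using \<open>pi\<^sup>2 > 9\<close> by (intro mult_strict_right_mono) auto
  finally have "1 / exp (c - 1) < pi\<^sup>2 / (6 * y\<^sup>2)"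
    using \<open>y > 0\<close> by (simp add: divide_simps mult.commute)
  moreover have "exp (1 - c) = 1 / exp (c - 1)"
    by (simp add: exp_diff)
  ultimately show ?thesis
    by (simp add: y_def)
qed

theorem proposition3p2:
  fixes m :: nat and c :: real
  assumes "m \<ge> 1" and "c > 2"
  shows "ereal (1 - pi\<^sup>2 / (6 * (c - 2)\<^sup>2)) \<le>
    liminf (\<lambda>n::nat. ereal (tv m n
      (conv_pow m n (OST m n) (nat \<lfloor>real n * ln (real n) - real n * ln (ln (real n)) - c * real n\<rfloor>))
      (unif m n)))"
proof -
  have "((\<lambda>n. tv_lower_bound c (real n)) \<longlongrightarrow> 1 - exp (1 - c)) sequentially"
    using tendsto_tv_lower_bound filterlim_real_sequentially by (rule filterlim_compose)
  moreover have "1 - pi\<^sup>2 / (6 * (c - 2)\<^sup>2) < 1 - exp (1 - c)"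
    using exp_one_minus_lt[OF assms(2)] by simp
  ultimately have "eventually (\<lambda>n. 1 - pi\<^sup>2 / (6 * (c - 2)\<^sup>2) < tv_lower_bound c (real n)) sequentially"
    by (rule order_tendstoD(1))
  moreover have "eventually (\<lambda>n. ln (real n) \<ge> 2 \<and> steps c (real n) \<ge> 0 \<and> hit_rate (real n) \<le> 1/2
                                 \<and> real n / ln (real n) \<ge> 2) sequentially"
    using eventually_tv_lower_bound_conditions filterlim_real_sequentially
    by (rule eventually_compose_filterlim)
  ultimately have "eventually (\<lambda>n. ereal (1 - pi\<^sup>2 / (6 * (c - 2)\<^sup>2)) \<le> ereal (tv m n
      (conv_pow m n (OST m n) (nat \<lfloor>real n * ln (real n) - real n * ln (ln (real n)) - c * real n\<rfloor>))
      (unif m n))) sequentially"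
  proof eventually_elim
    case (elim n)
    then have "tv_lower_bound c (real n)
        \<le> tv m n (conv_pow m n (OST m n) (nat \<lfloor>steps c (real n)\<rfloor>)) (unif m n)"
      by (intro tv_lower_bound_le_tv[OF assms(1)]) auto
    with elim(1) show ?case
      by (simp add: steps_def)
  qed
  then show ?thesis
    by (rule Liminf_bounded)
qed

end
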